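(* For all $\alpha\in[-1,1]$, \[ \Lambda(\alpha)\le c-|\alpha|(c-D),\qquad D=\mathbb E|F(0)|. \]
   Context: Let $c>0$, $q>0$, $\kappa>-1$. $F=(F(x))_{x\in\mathbb Z}$ and $B=(B(i))_{i\in\mathbb Z}$ are mutually independent families of i.i.d. random variables, $\mathbb P(B(i)=\pm1)=1/2$, and $F(x)$ has a density $\varrho$ that is even, continuous, strictly positive on $(-c,c)$, zero outside $(-c,c)$, with $\lim_{x\to c}\varrho(x)/|c-x|^{\kappa}=q$. A lazy walk satisfies $|\gamma(i+1)-\gamma(i)|\le1$; the action of a lazy walk $\gamma$ on $\{0,\dots,n\}$ is $A(B,F;\gamma)=\sum_{i=1}^nB(i)F(\gamma(i))$; $\bar A(B,F;n,k)$ is the minimal action over lazy walks from $(0,0)$ to $(n,k)$. The shape function $\Lambda$ is the deterministic function with $\bar A(B,F;n,[\alpha n])/n\to-\Lambda(\alpha)$ almost surely, $[\cdot]$ rounding towards $0$. *)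

theory Defs
  imports "HOL-Probability.Probability"
begin

definition round0 :: "real \<Rightarrow> int" where
  "round0 x = (if x \<ge> 0 then \<lfloor>x\<rfloor> else \<lceil>x\<rceil>)"

definition lazy_walk :: "nat \<Rightarrow> int \<Rightarrow> (nat \<Rightarrow> int) \<Rightarrow> bool" where
  "lazy_walk n k \<gamma> \<longleftrightarrow> \<gamma> 0 = 0 \<and> \<gamma> n = k \<and> (\<forall>i<n. \<bar>\<gamma> (Suc i) - \<gamma> i\<bar> \<le> 1)"

definition action :: "(int \<Rightarrow> real) \<Rightarrow> (int \<Rightarrow> real) \<Rightarrow> nat \<Rightarrow> (nat \<Rightarrow> int) \<Rightarrow> real" where
  "action b f n \<gamma> = (\<Sum>i=1..n. b (int i) * f (\<gamma> i))"

definition min_action :: "(int \<Rightarrow> real) \<Rightarrow> (int \<Rightarrow> real) \<Rightarrow> nat \<Rightarrow> int \<Rightarrow> real" where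
  "min_action b f n k = Inf (action b f n ` {\<gamma>. lazy_walk n k \<gamma>})"

definition env :: "(int \<Rightarrow> 'a \<Rightarrow> real) \<Rightarrow> (int \<Rightarrow> 'a \<Rightarrow> real) \<Rightarrow> int + int \<Rightarrow> 'a \<Rightarrow> real" where
  "env F B j = (case j of Inl x \<Rightarrow> F x | Inr i \<Rightarrow> B i)"

end

theory Submission
  imports Defs
begin

text \<open>
  Fix an environment with \<open>\<bar>B(i)\<bar> \<le> 1\<close> and \<open>\<bar>F(x)\<bar> \<le> c\<close>. A lazy walk from \<open>0\<close> to \<open>k \<ge> 0\<close> visits
  every \<open>x \<in> {1..k}\<close>; the step of its first visit to \<open>x\<close> contributes at least \<open>-\<bar>F(x)\<bar>\<close> to the
  action and every step contributes at least \<open>-c\<close>. So the minimal action is at least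
  \<open>-cn + \<Sum>x\<in>{1..k}. (c - \<bar>F(x)\<bar>)\<close>, whose expectation is \<open>-cn + k(c - D)\<close>. For \<open>k = [\<alpha>n]\<close>
  (negative \<open>\<alpha>\<close> reduce to positive ones by reflecting walks) Fatou's lemma, applied to the
  nonnegative variables \<open>c - n\<^sup>-\<^sup>1 \<Sum>x\<in>{1..k}. (c - \<bar>F(x)\<bar>)\<close>, turns the almost sure limit
  \<open>-\<Lambda>(\<alpha>)\<close> into \<open>\<Lambda>(\<alpha>) \<le> c - \<bar>\<alpha>\<bar>(c - D)\<close>.
\<close>

lemma action_ge_levels_reached:
  fixes b f :: "int \<Rightarrow> real" and \<gamma> :: "nat \<Rightarrow> int"
  assumes b: "\<And>i. \<bar>b i\<bar> \<le> 1" and f: "\<And>x. \<bar>f x\<bar> \<le> c"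
  shows "\<gamma> 0 = 0 \<Longrightarrow> (\<forall>i<n. \<bar>\<gamma> (Suc i) - \<gamma> i\<bar> \<le> 1) \<Longrightarrow> 0 \<le> j \<Longrightarrow> (\<exists>i\<le>n. j \<le> \<gamma> i)
    \<Longrightarrow> - c * real n + (\<Sum>x\<in>{1..j}. c - \<bar>f x\<bar>) \<le> action b f n \<gamma>"
proof (induction n arbitrary: j)
  case 0
  then show ?case by (simp add: action_def)
next
  case (Suc n)
  have "\<bar>b (int (Suc n)) * f (\<gamma> (Suc n))\<bar> \<le> \<bar>f (\<gamma> (Suc n))\<bar>"
    using mult_right_mono[OF b abs_ge_zero] by (simp add: abs_mult)
  then have last_step: "- \<bar>f (\<gamma> (Suc n))\<bar> \<le> b (int (Suc n)) * f (\<gamma> (Suc n))"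
    by linarith
  have action_Suc: "action b f (Suc n) \<gamma> = action b f n \<gamma> + b (int (Suc n)) * f (\<gamma> (Suc n))"
    by (simp add: action_def)
  show ?case
  proof (cases "\<exists>i\<le>n. j \<le> \<gamma> i")
    case True
    then have "- c * real n + (\<Sum>x\<in>{1..j}. c - \<bar>f x\<bar>) \<le> action b f n \<gamma>"
      using Suc by auto
    then show ?thesis using action_Suc last_step f[of "\<gamma> (Suc n)"] by (simp add: algebra_simps)
  next
    case False
    \<comment> \<open>the walk reaches level \<open>j\<close> for the first time at time \<open>n + 1\<close>\<close>
    then have "j \<le> \<gamma> (Suc n)" "\<gamma> n < j" "1 \<le> j"
      using Suc.prems(1,4) le_Suc_eq by auto
    then have first_visit: "\<gamma> (Suc n) = j" "\<gamma> n = j - 1"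
      using Suc.prems(2) by auto
    then have "- c * real n + (\<Sum>x\<in>{1..j-1}. c - \<bar>f x\<bar>) \<le> action b f n \<gamma>"
      using Suc.IH[of "j - 1"] Suc.prems(1,2) \<open>1 \<le> j\<close> by force
    moreover have "{1..j} = insert j {1..j-1}" using \<open>1 \<le> j\<close> by auto
    ultimately show ?thesis using action_Suc last_step first_visit by (simp add: algebra_simps)
  qed
qed

lemma min_action_ge_levels:
  fixes b f :: "int \<Rightarrow> real"
  assumes b: "\<And>i. \<bar>b i\<bar> \<le> 1" and f: "\<And>x. \<bar>f x\<bar> \<le> c" and k: "0 \<le> k" "k \<le> int n"
  shows "- c * real n + (\<Sum>x\<in>{1..k}. c - \<bar>f x\<bar>) \<le> min_action b f n k"
  unfolding min_action_def
proof (rule cInf_greatest)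
  have "lazy_walk n k (\<lambda>i. min (int i) k)"
    using k unfolding lazy_walk_def by auto
  then show "action b f n ` {\<gamma>. lazy_walk n k \<gamma>} \<noteq> {}" by blast
next
  fix a assume "a \<in> action b f n ` {\<gamma>. lazy_walk n k \<gamma>}"
  then obtain \<gamma> where \<gamma>: "lazy_walk n k \<gamma>" and "a = action b f n \<gamma>" by blast
  then show "- c * real n + (\<Sum>x\<in>{1..k}. c - \<bar>f x\<bar>) \<le> a"
    using action_ge_levels_reached[where b = b and f = f, OF b f] \<gamma> k by (auto simp: lazy_walk_def)
qed

lemma min_action_uminus:
  "min_action b f n (- k) = min_action b (\<lambda>x. f (- x)) n k"
proof -
  have "{\<gamma>. lazy_walk n (- k) \<gamma>} = (\<lambda>\<gamma> i. - \<gamma> i) ` {\<gamma>. lazy_walk n k \<gamma>}"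
  proof (intro equalityI subsetI)
    fix \<gamma> assume "\<gamma> \<in> {\<gamma>. lazy_walk n (- k) \<gamma>}"
    then have "(\<lambda>i. - \<gamma> i) \<in> {\<gamma>. lazy_walk n k \<gamma>}"
      by (auto simp: lazy_walk_def abs_minus_commute)
    then show "\<gamma> \<in> (\<lambda>\<gamma> i. - \<gamma> i) ` {\<gamma>. lazy_walk n k \<gamma>}"
      by (auto intro!: image_eqI[of _ _ "\<lambda>i. - \<gamma> i"])
  qed (auto simp: lazy_walk_def abs_minus_commute)
  moreover have "action b f n (\<lambda>i. - \<gamma> i) = action b (\<lambda>x. f (- x)) n \<gamma>" for \<gamma>
    by (simp add: action_def)
  ultimately show ?thesis
    unfolding min_action_def by (simp add: image_image)
qed

lemma round0_uminus: "round0 (- x) = - round0 x"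
  by (simp add: round0_def ceiling_def)

lemma min_action_round0:
  "min_action b f n (round0 (\<alpha> * real n))
     = min_action b (\<lambda>x. f (if 0 \<le> \<alpha> then x else - x)) n \<lfloor>\<bar>\<alpha>\<bar> * real n\<rfloor>"
proof (cases "0 \<le> \<alpha>")
  case True
  then show ?thesis by (simp add: round0_def)
next
  case False
  then have "\<alpha> * real n = - (\<bar>\<alpha>\<bar> * real n)" by simp
  moreover have "round0 (\<bar>\<alpha>\<bar> * real n) = \<lfloor>\<bar>\<alpha>\<bar> * real n\<rfloor>" by (simp add: round0_def)
  ultimately have "round0 (\<alpha> * real n) = - \<lfloor>\<bar>\<alpha>\<bar> * real n\<rfloor>" by (metis round0_uminus)
  then show ?thesis using False by (simp add: min_action_uminus)
qed

lemma LIMSEQ_floor_mult_divide: "(\<lambda>n. \<lfloor>a * real n\<rfloor> / real n) \<longlonglongrightarrow> a"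
proof (rule tendsto_sandwich[of "\<lambda>n. a - 1 / real n" _ _ "\<lambda>_. a"])
  show "\<forall>\<^sub>F n in sequentially. a - 1 / real n \<le> \<lfloor>a * real n\<rfloor> / real n"
    using eventually_ge_at_top[of "1::nat"]
  proof eventually_elim
    case (elim n)
    then have "0 < real n" by simp
    then show ?case by (simp add: le_divide_eq algebra_simps) linarith
  qed
  show "\<forall>\<^sub>F n in sequentially. \<lfloor>a * real n\<rfloor> / real n \<le> a"
    using eventually_ge_at_top[of "1::nat"]
  proof eventually_elim
    case (elim n)
    then have "0 < real n" by simp
    then show ?case by (simp add: divide_le_eq)
  qed
  show "(\<lambda>n. a - 1 / real n) \<longlonglongrightarrow> a"
    using tendsto_diff[OF tendsto_const lim_const_over_n[of 1]] by simp
qed simp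

lemma distributed_AE_in_support:
  assumes "distributed M lborel X (\<lambda>y. ennreal (\<rho> y))" and "\<And>y. 0 < \<rho> y \<Longrightarrow> y \<in> S"
  shows "AE \<omega> in M. X \<omega> \<in> S"
proof -
  have "AE y in density lborel (\<lambda>y. ennreal (\<rho> y)). y \<in> S"
    using assms(2) distributed_borel_measurable[OF assms(1)] by (auto simp: AE_density)
  then have "AE y in distr M lborel X. y \<in> S"
    by (subst distributed_distr_eq_density[OF assms(1)])
  then show ?thesis
    by (rule AE_distrD[OF distributed_measurable[OF assms(1)]])
qed

lemma (in prob_space) AE_eq_1_or_eq_minus_1:
  fixes X :: "'a \<Rightarrow> real"
  assumes "X \<in> borel_measurable M"
    and "prob {\<omega> \<in> space M. X \<omega> = 1} + prob {\<omega> \<in> space M. X \<omega> = -1} = 1"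
  shows "AE \<omega> in M. X \<omega> = 1 \<or> X \<omega> = -1"
proof -
  note assms(1)[measurable]
  have "prob ({\<omega> \<in> space M. X \<omega> = 1} \<union> {\<omega> \<in> space M. X \<omega> = -1})
      = prob {\<omega> \<in> space M. X \<omega> = 1} + prob {\<omega> \<in> space M. X \<omega> = -1}"
    by (rule finite_measure_Union) auto
  then have "prob ({\<omega> \<in> space M. X \<omega> = 1} \<union> {\<omega> \<in> space M. X \<omega> = -1}) = 1"
    using assms(2) by simp
  then have "AE \<omega> in M. \<omega> \<in> {\<omega> \<in> space M. X \<omega> = 1} \<union> {\<omega> \<in> space M. X \<omega> = -1}"
    by (rule AE_prob_1)
  then show ?thesis by eventually_elim auto
qed

lemma (in prob_space) le_lim_expectation_Fatou:
  fixes X :: "nat \<Rightarrow> 'a \<Rightarrow> real"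
  assumes int: "\<And>n. integrable M (X n)"
    and nonneg: "AE \<omega> in M. \<forall>n. 0 \<le> X n \<omega>"
    and lower: "AE \<omega> in M. \<forall>l<L. eventually (\<lambda>n. l < X n \<omega>) sequentially"
    and lim: "(\<lambda>n. expectation (X n)) \<longlonglongrightarrow> m"
  shows "L \<le> m"
proof (rule dense_le)
  fix l assume "l < L"
  note borel_measurable_integrable[OF int, measurable]
  have "0 \<le> expectation (X n)" for n
    using nonneg by (intro integral_nonneg_AE) auto
  then have "0 \<le> m"
    using LIMSEQ_le_const[OF lim] by blast
  have "ennreal l = (\<integral>\<^sup>+ \<omega>. ennreal l \<partial>M)"
    by (simp add: emeasure_space_1)
  also have "\<dots> \<le> (\<integral>\<^sup>+ \<omega>. liminf (\<lambda>n. ennreal (X n \<omega>)) \<partial>M)"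
  proof (rule nn_integral_mono_AE)
    show "AE \<omega> in M. ennreal l \<le> liminf (\<lambda>n. ennreal (X n \<omega>))"
      using lower
    proof eventually_elim
      case (elim \<omega>)
      then have "eventually (\<lambda>n. l < X n \<omega>) sequentially"
        using \<open>l < L\<close> by blast
      then show ?case
        by (intro Liminf_bounded, elim eventually_mono) (simp add: ennreal_leI)
    qed
  qed
  also have "\<dots> \<le> liminf (\<lambda>n. \<integral>\<^sup>+ \<omega>. ennreal (X n \<omega>) \<partial>M)"
    by (rule nn_integral_liminf) measurable
  also have "(\<lambda>n. \<integral>\<^sup>+ \<omega>. ennreal (X n \<omega>) \<partial>M) = (\<lambda>n. ennreal (expectation (X n)))"
    using nonneg by (intro ext nn_integral_eq_integral int) auto
  also have "liminf \<dots> = ennreal m"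
    by (intro lim_imp_Liminf tendsto_ennrealI lim) simp
  finally show "l \<le> m"
    using \<open>0 \<le> m\<close> by simp
qed

lemma (in prob_space) shape_function_le:
  fixes F B :: "int \<Rightarrow> 'a \<Rightarrow> real"
  assumes F_meas: "\<And>x. F x \<in> borel_measurable M"
    and bounded: "AE \<omega> in M. (\<forall>x. \<bar>F x \<omega>\<bar> \<le> c) \<and> (\<forall>i. \<bar>B i \<omega>\<bar> \<le> 1)"
    and "0 \<le> c"
    and mean: "\<And>x. expectation (\<lambda>\<omega>. \<bar>F x \<omega>\<bar>) = D"
    and shape: "AE \<omega> in M. (\<lambda>n. min_action (\<lambda>i. B i \<omega>) (\<lambda>x. F x \<omega>) n (round0 (\<alpha> * real n))
                                 / real n) \<longlonglongrightarrow> - \<Lambda>"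
    and "\<bar>\<alpha>\<bar> \<le> 1"
  shows "\<Lambda> \<le> c - \<bar>\<alpha>\<bar> * (c - D)"
proof -
  note F_meas[measurable]
  have F_int: "integrable M (\<lambda>\<omega>. \<bar>F x \<omega>\<bar>)" for x
    using bounded by (intro integrable_const_bound[where B = c]) auto
  define s where "s x = (if 0 \<le> \<alpha> then x else - x)" for x :: int
  define K where "K n = \<lfloor>\<bar>\<alpha>\<bar> * real n\<rfloor>" for n :: nat
  define S where "S n \<omega> = (\<Sum>x\<in>{1..K n}. c - \<bar>F (s x) \<omega>\<bar>)" for n \<omega>
  have K: "0 \<le> K n" "K n \<le> int n" for n
  proof -
    have "\<bar>\<alpha>\<bar> * real n \<le> real n"
      using mult_left_le_one_le[of "real n" "\<bar>\<alpha>\<bar>"] \<open>\<bar>\<alpha>\<bar> \<le> 1\<close> by simp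
    then show "0 \<le> K n" "K n \<le> int n"
      unfolding K_def by (simp_all add: floor_le_iff)
  qed
  have S_int: "integrable M (S n)" for n
    unfolding S_def by (auto intro!: integrable_diff F_int)
  have E_S: "expectation (S n) = K n * (c - D)" for n
    using K(1)[of n] unfolding S_def by (simp add: F_int mean prob_space)
  show ?thesis
  proof (rule le_lim_expectation_Fatou)
    show "integrable M (\<lambda>\<omega>. c - S n \<omega> / real n)" for n
      using S_int by auto
    show "AE \<omega> in M. \<forall>n. 0 \<le> c - S n \<omega> / real n"
      using bounded
    proof eventually_elim
      case (elim \<omega>)
      have "S n \<omega> \<le> K n * c" for n
        using sum_mono[of "{1..K n}" "\<lambda>x. c - \<bar>F (s x) \<omega>\<bar>" "\<lambda>_. c"] K(1)[of n]
        unfolding S_def by simp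
      moreover have "real_of_int (K n) * c \<le> real n * c" for n
        using K(2)[of n] \<open>0 \<le> c\<close> by (intro mult_right_mono) simp_all
      ultimately have "S n \<omega> \<le> real n * c" for n
        by (meson order_trans)
      then show ?case
        using \<open>0 \<le> c\<close> by (auto simp: divide_le_eq mult.commute)
    qed
    show "AE \<omega> in M. \<forall>l<\<Lambda>. eventually (\<lambda>n. l < c - S n \<omega> / real n) sequentially"
      using bounded shape
    proof eventually_elim
      case (elim \<omega>)
      let ?A = "\<lambda>n. min_action (\<lambda>i. B i \<omega>) (\<lambda>x. F x \<omega>) n (round0 (\<alpha> * real n))"
      have A_ge: "- c * real n + S n \<omega> \<le> ?A n" for n
        unfolding min_action_round0 S_def K_def s_def
        by (rule min_action_ge_levels) (use elim K in \<open>auto simp: K_def\<close>)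
      have le: "eventually (\<lambda>n. - ?A n / real n \<le> c - S n \<omega> / real n) sequentially"
        using eventually_gt_at_top[of "0::nat"]
        by eventually_elim (use A_ge in \<open>simp add: field_simps\<close>)
      have lim: "(\<lambda>n. - ?A n / real n) \<longlonglongrightarrow> \<Lambda>"
        using tendsto_minus[OF elim(2)] by simp
      show ?case
      proof (intro allI impI)
        fix l assume "l < \<Lambda>"
        with lim have "eventually (\<lambda>n. l < - ?A n / real n) sequentially"
          by (rule order_tendstoD(1))
        with le show "eventually (\<lambda>n. l < c - S n \<omega> / real n) sequentially"
          by eventually_elim linarith
      qed
    qed
    have "(\<lambda>n. c - K n / real n * (c - D)) \<longlonglongrightarrow> c - \<bar>\<alpha>\<bar> * (c - D)"
      unfolding K_def by (intro tendsto_intros LIMSEQ_floor_mult_divide)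
    then show "(\<lambda>n. expectation (\<lambda>\<omega>. c - S n \<omega> / real n)) \<longlonglongrightarrow> c - \<bar>\<alpha>\<bar> * (c - D)"
      using S_int by (simp add: E_S prob_space)
  qed
qed

theorem lemma3p6:
  fixes M :: "'a measure"
    and F B :: "int \<Rightarrow> 'a \<Rightarrow> real"
    and \<rho> :: "real \<Rightarrow> real"
    and c q \<kappa> :: real
    and \<Lambda> :: "real \<Rightarrow> real"
    and \<alpha> :: real
  assumes "prob_space M"
    and "c > 0" and "q > 0" and "\<kappa> > -1"
    and indep: "prob_space.indep_vars M (\<lambda>_. borel) (env F B) UNIV"
    and B_dist: "\<And>i. prob_space.prob M {\<omega> \<in> space M. B i \<omega> = 1} = 1/2"
    and B_dist': "\<And>i. prob_space.prob M {\<omega> \<in> space M. B i \<omega> = -1} = 1/2"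
    and F_dist: "\<And>x. distributed M lborel (F x) (\<lambda>y. ennreal (\<rho> y))"
    and \<rho>_even: "\<And>y. \<rho> (-y) = \<rho> y"
    and \<rho>_cont: "continuous_on {-c<..<c} \<rho>"
    and \<rho>_pos: "\<And>y. y \<in> {-c<..<c} \<Longrightarrow> \<rho> y > 0"
    and \<rho>_zero: "\<And>y. y \<notin> {-c<..<c} \<Longrightarrow> \<rho> y = 0"
    and \<rho>_edge: "((\<lambda>y. \<rho> y / \<bar>c - y\<bar> powr \<kappa>) \<longlongrightarrow> q) (at_left c)"
    and shape: "\<And>\<beta>. \<beta> \<in> {-1..1} \<Longrightarrow>
       AE \<omega> in M. ((\<lambda>n. min_action (\<lambda>i. B i \<omega>) (\<lambda>x. F x \<omega>) n (round0 (\<beta> * real n)) / real n)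
                     \<longlonglongrightarrow> - \<Lambda> \<beta>)"
    and "\<alpha> \<in> {-1..1}"
  shows "\<Lambda> \<alpha> \<le> c - \<bar>\<alpha>\<bar> * (c - prob_space.expectation M (\<lambda>\<omega>. \<bar>F 0 \<omega>\<bar>))"
proof -
  interpret prob_space M by fact
  have env_meas: "env F B j \<in> borel_measurable M" for j
    using indep by (simp add: indep_vars_def)
  have F_meas: "F x \<in> borel_measurable M" and B_meas: "B i \<in> borel_measurable M" for x i
    using env_meas[of "Inl x"] env_meas[of "Inr i"] by (simp_all add: env_def)
  have "AE \<omega> in M. \<bar>F x \<omega>\<bar> \<le> c" for x
  proof -
    have "AE \<omega> in M. F x \<omega> \<in> {-c<..<c}"
      using distributed_AE_in_support[OF F_dist] \<rho>_zero by (metis less_irrefl)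
    then show ?thesis by eventually_elim auto
  qed
  moreover have "AE \<omega> in M. \<bar>B i \<omega>\<bar> \<le> 1" for i
  proof -
    have "AE \<omega> in M. B i \<omega> = 1 \<or> B i \<omega> = -1"
      using B_dist[of i] B_dist'[of i] by (intro AE_eq_1_or_eq_minus_1 B_meas) simp
    then show ?thesis by eventually_elim auto
  qed
  ultimately have bounded: "AE \<omega> in M. (\<forall>x. \<bar>F x \<omega>\<bar> \<le> c) \<and> (\<forall>i. \<bar>B i \<omega>\<bar> \<le> 1)"
    by (simp add: AE_all_countable)
  have "0 \<le> \<rho> y" for y
    using \<rho>_pos[of y] \<rho>_zero[of y] by fastforce
  then have mean: "expectation (\<lambda>\<omega>. \<bar>F x \<omega>\<bar>) = expectation (\<lambda>\<omega>. \<bar>F 0 \<omega>\<bar>)" for x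
    using distributed_integral[OF F_dist[of x]] distributed_integral[OF F_dist[of 0]] by simp
  show ?thesis
    using shape_function_le[OF F_meas bounded _ mean shape[OF \<open>\<alpha> \<in> {-1..1}\<close>]] \<open>c > 0\<close> \<open>\<alpha> \<in> {-1..1}\<close>
    by (simp add: abs_le_iff)
qed

end
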